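(* Let $m,k\ge 1$, let $a,b>0$ and $z$ an integer with $0<z<k$, and let $p_*$ be the probability that a uniformly random $y\in\{0,1\}^k$ lies in the optimal region $\bar{X}_*=\{y\in\{0,1\}^k: f_{gen\_trap(k)}(y)>a\}$. Let $c>0$ be a constant ($c=\Omega(1)$). If a population of $\mu=\frac{c}{p_*}m$ bitstrings of length $mk$ is drawn independently and uniformly at random (each split into $m$ consecutive blocks of length $k$), then the probability that for every $i\in\{1,\dots,m\}$ at least one individual has its $i$-th block in $\bar{X}_*$ is at least $1-\epsilon$ with $\epsilon=me^{-cm}$, exponentially small in $m$.
   Context: Generalized trap function: for $y\in\{0,1\}^k$ with $u(y)$ ones, $f_{gen\_trap(k)}(y)=\frac{a}{z}(z-u(y))$ if $u(y)\le z$ and $f_{gen\_trap(k)}(y)=\frac{b}{k-z}(u(y)-z)$ otherwise. Equivalently $p_*=\Pr\big(\mathrm{Bin}(k,1/2)\ge \lceil a(k-z)/b\rceil+z\big)$. *)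

theory Defs
  imports "HOL-Probability.Probability"
begin

definition bitstrings :: "nat \<Rightarrow> (nat \<Rightarrow> bool) set" where
  "bitstrings n = {0..<n} \<rightarrow>\<^sub>E (UNIV :: bool set)"

definition ones :: "nat \<Rightarrow> (nat \<Rightarrow> bool) \<Rightarrow> nat" where
  "ones k y = card {j \<in> {0..<k}. y j}"

definition gen_trap :: "nat \<Rightarrow> real \<Rightarrow> real \<Rightarrow> nat \<Rightarrow> (nat \<Rightarrow> bool) \<Rightarrow> real" where
  "gen_trap k a b z y =
     (if ones k y \<le> z then a / real z * (real z - real (ones k y))
      else b / (real k - real z) * (real (ones k y) - real z))"

definition opt_region :: "nat \<Rightarrow> real \<Rightarrow> real \<Rightarrow> nat \<Rightarrow> (nat \<Rightarrow> bool) set" where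
  "opt_region k a b z = {y \<in> bitstrings k. gen_trap k a b z y > a}"

definition p_star :: "nat \<Rightarrow> real \<Rightarrow> real \<Rightarrow> nat \<Rightarrow> real" where
  "p_star k a b z = measure_pmf.prob (pmf_of_set (bitstrings k)) (opt_region k a b z)"

text \<open>The i-th block (i = 0..m-1) of length k of a bitstring x of length m*k.\<close>
definition block :: "nat \<Rightarrow> nat \<Rightarrow> (nat \<Rightarrow> bool) \<Rightarrow> (nat \<Rightarrow> bool)" where
  "block k i x = restrict (\<lambda>j. x (i * k + j)) {0..<k}"

definition populations :: "nat \<Rightarrow> nat \<Rightarrow> nat \<Rightarrow> (nat \<Rightarrow> nat \<Rightarrow> bool) set" where
  "populations mu m k = {0..<mu} \<rightarrow>\<^sub>E bitstrings (m * k)"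

end

theory Submission
  imports Defs
begin

(* The i-th block of a uniformly random bitstring of length m k is uniformly distributed on
   {0,1}^k, so each of the mu independent individuals misses the optimal region in block i with
   probability 1 - p_star.  Block i is therefore missed by the whole population with probability
   (1 - p_star)^mu <= exp (- p_star mu) = exp (- c m), and a union bound over the m blocks finishes. *)

lemma finite_bitstrings [simp]: "finite (bitstrings n)"
  unfolding bitstrings_def by (simp add: finite_PiE)

lemma card_bitstrings [simp]: "card (bitstrings n) = 2 ^ n"
  unfolding bitstrings_def by (simp add: card_PiE)

lemma bitstrings_nonempty [simp]: "bitstrings n \<noteq> {}"
  unfolding bitstrings_def by (simp add: PiE_eq_empty_iff)

lemma block_in_bitstrings: "block k i x \<in> bitstrings k"
  unfolding block_def bitstrings_def by simp

lemma block_eq_iff: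
  assumes "y \<in> extensional {0..<k}"
  shows "block k i x = y \<longleftrightarrow> (\<forall>t \<in> {i * k..<i * k + k}. x t = y (t - i * k))"
proof
  assume eq: "block k i x = y"
  show "\<forall>t \<in> {i * k..<i * k + k}. x t = y (t - i * k)"
  proof
    fix t assume "t \<in> {i * k..<i * k + k}"
    then have "t - i * k < k" and "i * k + (t - i * k) = t" by auto
    then show "x t = y (t - i * k)"
      using fun_cong[OF eq, of "t - i * k"] unfolding block_def by simp
  qed
next
  assume "\<forall>t \<in> {i * k..<i * k + k}. x t = y (t - i * k)"
  then show "block k i x = y"
    unfolding block_def using assms by (auto simp: fun_eq_iff extensional_def)
qed

lemma block_fibre_eq_PiE:
  assumes "y \<in> bitstrings k" and "i * k + k \<le> n"
  shows "{x \<in> bitstrings n. block k i x = y} =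
    PiE {0..<n} (\<lambda>t. if t \<in> {i * k..<i * k + k} then {y (t - i * k)} else UNIV)"
proof -
  have "block k i x = y \<longleftrightarrow> (\<forall>t \<in> {i * k..<i * k + k}. x t = y (t - i * k))" for x
    using assms(1) unfolding bitstrings_def by (intro block_eq_iff) (simp add: PiE_def)
  with assms(2) show ?thesis
    unfolding bitstrings_def by (auto simp: PiE_def Pi_def)
qed

lemma card_block_fibre:
  assumes "y \<in> bitstrings k" and "i * k + k \<le> n"
  shows "card {x \<in> bitstrings n. block k i x = y} = 2 ^ (n - k)"
proof -
  let ?J = "{i * k..<i * k + k}"
  have "card {x \<in> bitstrings n. block k i x = y} = (\<Prod>t\<in>{0..<n}. if t \<in> ?J then 1 else 2)"
    unfolding block_fibre_eq_PiE[OF assms] card_PiE[OF finite_atLeastLessThan]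
    by (intro prod.cong) auto
  also have "\<dots> = 2 ^ card ({0..<n} - ?J)"
    unfolding prod.If_cases[OF finite_atLeastLessThan] Collect_mem_eq by (simp add: Diff_eq)
  also have "card ({0..<n} - ?J) = n - k"
    using assms(2) by (subst card_Diff_subset) auto
  finally show ?thesis .
qed

lemma map_pmf_block_uniform:
  assumes "i < m"
  shows "map_pmf (block k i) (pmf_of_set (bitstrings (m * k))) = pmf_of_set (bitstrings k)"
proof (rule pmf_eqI)
  fix y
  have block_fits: "i * k + k \<le> m * k"
    using assms by (metis Suc_leI add.commute mult_Suc mult_le_mono1)
  show "pmf (map_pmf (block k i) (pmf_of_set (bitstrings (m * k)))) y = pmf (pmf_of_set (bitstrings k)) y"
  proof (cases "y \<in> bitstrings k")
    case True
    have "(2::real) ^ (m * k) = 2 ^ (m * k - k) * 2 ^ k"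
      using block_fits by (simp flip: power_add)
    then show ?thesis
      using True card_block_fibre[OF True block_fits]
      by (simp add: pmf_map measure_pmf_of_set vimage_def Int_def conj_commute)
  next
    case False
    then show ?thesis
      using block_in_bitstrings by (auto simp: pmf_map measure_pmf_of_set vimage_def)
  qed
qed

lemma prob_uniform_PiE_avoid:
  fixes A E :: "'b set" and I :: "'a set"
  assumes "finite I" and "finite A" and "A \<noteq> {}"
  shows "measure (pmf_of_set (PiE I (\<lambda>_. A))) {P. \<forall>j\<in>I. P j \<notin> E}
    = (1 - measure (pmf_of_set A) E) ^ card I"
proof -
  have avoid_eq: "PiE I (\<lambda>_. A) \<inter> {P. \<forall>j\<in>I. P j \<notin> E} = PiE I (\<lambda>_. A - E)"
    by (auto simp: PiE_def Pi_def)
  have "card (A - E) = card A - card (A \<inter> E)"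
    by (metis card_Diff_subset_Int assms(2) finite_Int Diff_Int2 inf.idem)
  moreover have "card (A \<inter> E) \<le> card A"
    using assms(2) by (simp add: card_mono)
  ultimately have "1 - measure (pmf_of_set A) E = real (card (A - E)) / card A"
    using assms by (simp add: measure_pmf_of_set field_simps card_gt_0_iff)
  moreover have "PiE I (\<lambda>_. A) \<noteq> {}" and "finite (PiE I (\<lambda>_. A))"
    using assms by (auto simp: PiE_eq_empty_iff finite_PiE)
  ultimately show ?thesis
    using assms by (simp add: measure_pmf_of_set avoid_eq card_PiE power_divide)
qed

lemma prob_every_event_hit:
  fixes A :: "'b set" and E :: "nat \<Rightarrow> 'b set" and m mu :: nat
  assumes "finite A" and "A \<noteq> {}"
    and "\<And>i. i < m \<Longrightarrow> measure (pmf_of_set A) (E i) = p"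
  defines "Pop \<equiv> PiE {0..<mu} (\<lambda>_. A)"
  shows "measure (pmf_of_set Pop) {P \<in> Pop. \<forall>i<m. \<exists>j<mu. P j \<in> E i}
    \<ge> 1 - real m * (1 - p) ^ mu"
proof -
  let ?M = "pmf_of_set Pop"
  let ?Miss = "\<lambda>i. {P. \<forall>j\<in>{0..<mu}. P j \<notin> E i}"
  have "Pop \<noteq> {}" and "finite Pop"
    using assms(1,2) by (auto simp: Pop_def PiE_eq_empty_iff finite_PiE)
  then have set_M: "set_pmf ?M = Pop"
    by simp
  have "{P \<in> Pop. \<forall>i<m. \<exists>j<mu. P j \<in> E i} = (UNIV - (\<Union>i<m. ?Miss i)) \<inter> set_pmf ?M"
    unfolding set_M by auto
  then have "measure ?M {P \<in> Pop. \<forall>i<m. \<exists>j<mu. P j \<in> E i}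
      = measure ?M (UNIV - (\<Union>i<m. ?Miss i))"
    by (simp only: measure_Int_set_pmf)
  also have "\<dots> = 1 - measure ?M (\<Union>i<m. ?Miss i)"
    using measure_pmf.prob_compl[of "\<Union>i<m. ?Miss i" ?M] by simp
  also have "\<dots> \<ge> 1 - (\<Sum>i<m. measure ?M (?Miss i))"
    using measure_pmf.finite_measure_subadditive_finite[of "{..<m}" ?Miss ?M] by simp
  also have "(\<Sum>i<m. measure ?M (?Miss i)) = real m * (1 - p) ^ mu"
    using assms(3) prob_uniform_PiE_avoid[OF _ assms(1,2), of "{0..<mu}"]
    by (simp add: Pop_def)
  finally show ?thesis .
qed

lemma one_minus_power_le_exp:
  fixes p :: real
  assumes "p \<le> 1"
  shows "(1 - p) ^ n \<le> exp (- p * n)"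
proof -
  have "(1 - p) ^ n \<le> exp (- p) ^ n"
    using assms exp_ge_add_one_self[of "- p"] by (intro power_mono) auto
  then show ?thesis
    by (simp add: exp_of_nat_mult[symmetric] mult.commute)
qed

theorem lemma7p1:
  fixes m k z mu :: nat and a b c :: real
  assumes "m \<ge> 1" and "k \<ge> 1"
    and "a > 0" and "b > 0"
    and "0 < z" and "z < k"
    and "c > 0"
    and "p_star k a b z > 0"
    and "real mu = c / p_star k a b z * real m"
  shows "measure_pmf.prob (pmf_of_set (populations mu m k))
           {P \<in> populations mu m k. \<forall>i<m. \<exists>j<mu. block k i (P j) \<in> opt_region k a b z}
         \<ge> 1 - real m * exp (- c * real m)"
proof -
  let ?X = "opt_region k a b z" and ?p = "p_star k a b z"
  have block_hits: "measure (pmf_of_set (bitstrings (m * k))) {x. block k i x \<in> ?X} = ?p"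
    if "i < m" for i
    using arg_cong[OF map_pmf_block_uniform[OF that], of "\<lambda>M. measure M ?X"]
    by (simp add: p_star_def vimage_def)
  have "?p * real mu = c * real m"
    using assms(8,9) by simp
  then have "(1 - ?p) ^ mu \<le> exp (- c * real m)"
    using one_minus_power_le_exp[of ?p mu] unfolding p_star_def by simp
  then have "1 - real m * exp (- c * real m) \<le> 1 - real m * (1 - ?p) ^ mu"
    by (simp add: mult_left_mono)
  also have "\<dots> \<le> measure_pmf.prob (pmf_of_set (populations mu m k))
           {P \<in> populations mu m k. \<forall>i<m. \<exists>j<mu. block k i (P j) \<in> ?X}"
    using prob_every_event_hit[of "bitstrings (m * k)" m "\<lambda>i. {x. block k i x \<in> ?X}" ?p mu]
      block_hits unfolding populations_def by simp
  finally show ?thesis .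
qed

end
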